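(* For $\alpha,\epsilon\in\mathbb{C}$ with $\epsilon=0$ or $\epsilon^{-1}\notin\mathbb{Z}$, let $f(m,n)=\frac{(\alpha+n+\alpha\epsilon m)(1+\epsilon n)}{1+\epsilon(m+n)}$ for $m,n\in\mathbb{Z}$ (the structure constants of the left-symmetric algebra $V_{\alpha,\epsilon}$ on the Witt algebra with basis $\{x_n\}$, $x_mx_n=f(m,n)x_{m+n}$). Consider functions $\omega:\mathbb{Z}\times\mathbb{Z}\to\mathbb{C}$ satisfying, for all $m,n,l\in\mathbb{Z}$, $$\omega(m,n)-\omega(n,m)=\tfrac{1}{12}(n^3-n)\delta_{m+n,0},\qquad (n-m)\omega(m+n,l)=\omega(m,n+l)f(n,l)-\omega(n,m+l)f(m,l).$$ If $\alpha\neq0$ or $\epsilon=0$, no such $\omega$ exists. If $\alpha=0$, $\epsilon\neq0$ and $\epsilon^{-1}\notin\mathbb{Z}$, there is exactly one such $\omega$, namely $$\omega(m,n)=\tfrac{1}{24}\big(n^3-n-(\epsilon-\epsilon^{-1})n^2\big)\delta_{m+n,0}.$$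
   Context: These conditions on $\omega$ are exactly the conditions for the product $\theta\theta=x_m\theta=\theta x_m=0$, $x_mx_n=f(m,n)x_{m+n}+\omega(m,n)\theta$ on $V_{\alpha,\epsilon}\oplus\mathbb{C}\theta$ to be a left-symmetric algebra (i.e. $(xy)z-x(yz)=(yx)z-y(xz)$) whose commutator is the Virasoro bracket $[x_m,x_n]=(n-m)x_{m+n}+\delta_{m+n,0}\frac{n^3-n}{12}\theta$, $[\theta,x_n]=0$. *)

theory Defs
  imports Complex_Main
begin

definition lsa_f :: "complex \<Rightarrow> complex \<Rightarrow> int \<Rightarrow> int \<Rightarrow> complex" where
  "lsa_f \<alpha> \<epsilon> m n =
     ((\<alpha> + of_int n + \<alpha> * \<epsilon> * of_int m) * (1 + \<epsilon> * of_int n)) / (1 + \<epsilon> * of_int (m + n))"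

definition kdelta :: "int \<Rightarrow> int \<Rightarrow> complex" where
  "kdelta a b = (if a = b then 1 else 0)"

definition cocycle_cond :: "complex \<Rightarrow> complex \<Rightarrow> (int \<Rightarrow> int \<Rightarrow> complex) \<Rightarrow> bool" where
  "cocycle_cond \<alpha> \<epsilon> \<omega> \<longleftrightarrow>
     (\<forall>m n. \<omega> m n - \<omega> n m = (1/12) * (of_int n ^ 3 - of_int n) * kdelta (m + n) 0) \<and>
     (\<forall>m n l. (of_int n - of_int m) * \<omega> (m + n) l =
              \<omega> m (n + l) * lsa_f \<alpha> \<epsilon> n l - \<omega> n (m + l) * lsa_f \<alpha> \<epsilon> m l)"

end

theory Submission
  imports Defs
begin

text \<open>
  For \<open>\<alpha> \<noteq> 0\<close> the identity at \<open>l = 0\<close> expresses \<open>\<omega>(0,0)\<close> through the skew part of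
  \<open>\<omega>\<close>, and two instances of it are incompatible. For \<open>\<alpha> = 0\<close>, specialising \<open>m = 0\<close> shows
  that \<open>\<omega>\<close> vanishes off the anti-diagonal \<open>m + n = 0\<close>. Writing \<open>\<omega>(m,-m) = (1 - \<epsilon> m) v(m)\<close>,
  the identity on the anti-diagonal becomes the \<open>\<epsilon>\<close>-free equation
  \<open>(n - m) v(m + n) = (m + n) (v(n) - v(m))\<close>, whose solutions are exactly the quadratics
  \<open>a m + b m\<^sup>2\<close>. The skew condition then forces \<open>a = 1/24\<close> and \<open>\<epsilon> b = 1/24\<close>: impossible
  for \<open>\<epsilon> = 0\<close>, and the stated \<open>\<omega>\<close> otherwise.
\<close>

definition witt_equation :: "(int \<Rightarrow> 'a::comm_ring_1) \<Rightarrow> bool" where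
  "witt_equation d \<longleftrightarrow>
     (\<forall>m n. (of_int n - of_int m) * d (m + n) = of_int (m + n) * (d n - d m))"

lemma witt_equation_quadratic: "witt_equation (\<lambda>m. a * of_int m + b * of_int m ^ 2)"
  unfolding witt_equation_def by (simp add: algebra_simps power2_eq_square)

lemma witt_equation_diff:
  "witt_equation d \<Longrightarrow> witt_equation e \<Longrightarrow> witt_equation (\<lambda>m. d m - e m)"
  unfolding witt_equation_def
proof (intro allI)
  fix m n
  assume "\<forall>m n. (of_int n - of_int m) * d (m + n) = of_int (m + n) * (d n - d m)"
    and "\<forall>m n. (of_int n - of_int m) * e (m + n) = of_int (m + n) * (e n - e m)"
  then have "(of_int n - of_int m) * d (m + n) = of_int (m + n) * (d n - d m)"
    and "(of_int n - of_int m) * e (m + n) = of_int (m + n) * (e n - e m)"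
    by blast+
  then show "(of_int n - of_int m) * (d (m + n) - e (m + n)) =
      of_int (m + n) * (d n - e n - (d m - e m))"
    by (simp add: right_diff_distrib)
qed

lemma witt_equation_reflect: "witt_equation d \<Longrightarrow> witt_equation (\<lambda>m. d (- m))"
  unfolding witt_equation_def
proof (intro allI)
  fix m n
  assume "\<forall>m n. (of_int n - of_int m) * d (m + n) = of_int (m + n) * (d n - d m)"
  from this[rule_format, of "-m" "-n"]
  show "(of_int n - of_int m) * d (- (m + n)) = of_int (m + n) * (d (- n) - d (- m))"
    by (simp add: algebra_simps)
qed

lemma witt_equation_vanishes_nonneg:
  fixes d :: "int \<Rightarrow> 'a::field_char_0"
  assumes "witt_equation d" and "d 1 = 0" and "d (-1) = 0"
  shows "d (int k) = 0"
proof -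
  have eq: "(of_int n - of_int m) * d (m + n) = of_int (m + n) * (d n - d m)" for m n
    using assms(1) unfolding witt_equation_def by blast
  show ?thesis
  proof (induction k)
    case 0
    show ?case using eq[where m = 0 and n = 1] by simp
  next
    case (Suc k)
    consider "k = 0" | "k = 1" | "k \<ge> 2" by linarith
    then show ?case
    proof cases
      case 1 then show ?thesis using assms(2) by simp
    next
      case 2 then show ?thesis using eq[where m = "-1" and n = 2] assms(2,3) by simp
    next
      case 3
      have "(1 - of_int (int k)) * d (int k + 1) = of_int (int k + 1) * (d 1 - d (int k))"
        using eq[where m = "int k" and n = 1] by simp
      then have "(1 - of_int (int k)) * d (int k + 1) = 0"
        using Suc.IH assms(2) by simp
      moreover have "(1 - of_int (int k) :: 'a) \<noteq> 0"
        using 3 by simp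
      ultimately have "d (int k + 1) = 0" by simp
      then show ?thesis by (simp add: add.commute)
    qed
  qed
qed

lemma witt_equation_vanishes:
  fixes d :: "int \<Rightarrow> 'a::field_char_0"
  assumes "witt_equation d" and "d 1 = 0" and "d (-1) = 0"
  shows "d k = 0"
proof (cases "k \<ge> 0")
  case True
  then show ?thesis using witt_equation_vanishes_nonneg[OF assms, of "nat k"] by simp
next
  case False
  have "witt_equation (\<lambda>m. d (- m))" using assms(1) by (rule witt_equation_reflect)
  from witt_equation_vanishes_nonneg[OF this, of "nat (- k)"] False assms(2,3)
  show ?thesis by simp
qed

lemma witt_equation_imp_quadratic:
  fixes d :: "int \<Rightarrow> 'a::field_char_0"
  assumes "witt_equation d"
  obtains a b where "\<And>m. d m = a * of_int m + b * of_int m ^ 2"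
proof
  define a where "a = (d 1 - d (-1)) / 2"
  define b where "b = (d 1 + d (-1)) / 2"
  let ?e = "\<lambda>m. d m - (a * of_int m + b * of_int m ^ 2)"
  have "witt_equation ?e"
    using assms witt_equation_quadratic by (rule witt_equation_diff)
  moreover have "?e 1 = 0" and "?e (-1) = 0"
    unfolding a_def b_def by (simp_all add: field_simps)
  ultimately show "d m = a * of_int m + b * of_int m ^ 2" for m
    using witt_equation_vanishes[of ?e m] by simp
qed

lemma one_plus_mult_of_int_neq_zero:
  fixes \<epsilon> :: complex
  assumes "\<epsilon> = 0 \<or> inverse \<epsilon> \<notin> \<int>"
  shows "1 + \<epsilon> * of_int k \<noteq> 0"
proof
  assume h: "1 + \<epsilon> * of_int k = 0"
  then have "\<epsilon> \<noteq> 0" by auto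
  moreover from h have "\<epsilon> * of_int (- k) = 1"
    by (simp add: algebra_simps add_eq_0_iff)
  then have "inverse \<epsilon> = of_int (- k)" by (rule inverse_unique)
  ultimately show False using assms by auto
qed

lemma lsa_f_right_zero:
  assumes "1 + \<epsilon> * of_int n \<noteq> 0"
  shows "lsa_f \<alpha> \<epsilon> n 0 = \<alpha>"
  using assms unfolding lsa_f_def by (simp add: field_simps)

lemma lsa_f_alpha_zero:
  "lsa_f 0 \<epsilon> n l = of_int l * (1 + \<epsilon> * of_int l) / (1 + \<epsilon> * of_int (n + l))"
  unfolding lsa_f_def by simp

lemma cocycle_cond_imp_alpha_zero:
  assumes nz: "\<And>k. 1 + \<epsilon> * of_int k \<noteq> 0" and "cocycle_cond \<alpha> \<epsilon> \<omega>"
  shows "\<alpha> = 0"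
proof -
  from assms(2) have S: "\<And>m n. \<omega> m n - \<omega> n m = (1/12) * (of_int n ^ 3 - of_int n) * kdelta (m + n) 0"
    and E: "\<And>m n l. (of_int n - of_int m) * \<omega> (m + n) l =
              \<omega> m (n + l) * lsa_f \<alpha> \<epsilon> n l - \<omega> n (m + l) * lsa_f \<alpha> \<epsilon> m l"
    unfolding cocycle_cond_def by blast+
  have f: "lsa_f \<alpha> \<epsilon> n 0 = \<alpha>" for n using nz by (rule lsa_f_right_zero)
  \<comment> \<open>With l = 0 the identity reads (n - m) \<omega>(m+n, 0) = \<alpha> (\<omega>(m,n) - \<omega>(n,m)).\<close>
  have "2 * \<omega> 0 0 = \<alpha> * (\<omega> (-1) 1 - \<omega> 1 (-1))"
    using E[where m = "-1" and n = 1 and l = 0] f by (simp add: algebra_simps)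
  moreover have "4 * \<omega> 0 0 = \<alpha> * (\<omega> (-2) 2 - \<omega> 2 (-2))"
    using E[where m = "-2" and n = 2 and l = 0] f by (simp add: algebra_simps)
  moreover have "\<omega> (-1) 1 - \<omega> 1 (-1) = 0" and "\<omega> (-2) 2 - \<omega> 2 (-2) = 1/2"
    using S[where m = "-1" and n = 1] S[where m = "-2" and n = 2] by (simp_all add: kdelta_def)
  ultimately show ?thesis by simp
qed

lemma cocycle_cond_alpha_zero_support:
  assumes nz: "\<And>k. 1 + \<epsilon> * of_int k \<noteq> 0" and "cocycle_cond 0 \<epsilon> \<omega>" and "n + l \<noteq> 0"
  shows "\<omega> n l = 0"
proof -
  from assms(2) have S: "\<And>m n. \<omega> m n - \<omega> n m = (1/12) * (of_int n ^ 3 - of_int n) * kdelta (m + n) 0"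
    and E: "\<And>m n l. (of_int n - of_int m) * \<omega> (m + n) l =
              \<omega> m (n + l) * lsa_f 0 \<epsilon> n l - \<omega> n (m + l) * lsa_f 0 \<epsilon> m l"
    unfolding cocycle_cond_def by blast+
  have f_left: "lsa_f 0 \<epsilon> 0 l = of_int l" for l using nz[of l] by (simp add: lsa_f_alpha_zero)
  have "\<omega> k 0 = 0" if "k \<noteq> 0" for k
    using E[where m = 0 and n = k and l = 0] that by (simp add: f_left lsa_f_alpha_zero)
  then have "\<omega> 0 k = 0" if "k \<noteq> 0" for k
    using S[where m = 0 and n = k] that by (simp add: kdelta_def)
  moreover have "of_int n * \<omega> n l = \<omega> 0 (n + l) * lsa_f 0 \<epsilon> n l - \<omega> n l * of_int l"
    using E[where m = 0 and n = n and l = l] f_left by (simp add: algebra_simps)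
  ultimately have "of_int (n + l) * \<omega> n l = 0" using assms(3) by (simp add: algebra_simps)
  then show ?thesis using assms(3) by (metis mult_eq_0_iff of_int_eq_0_iff)
qed

lemma cocycle_identity_anti_diagonal_iff:
  assumes nz: "\<And>k. 1 + \<epsilon> * of_int k \<noteq> 0"
    and v: "\<And>k. \<omega> k (- k) = (1 - \<epsilon> * of_int k) * v k"
  shows "(of_int n - of_int m) * \<omega> (m + n) (- (m + n)) =
           \<omega> m (n + - (m + n)) * lsa_f 0 \<epsilon> n (- (m + n))
         - \<omega> n (m + - (m + n)) * lsa_f 0 \<epsilon> m (- (m + n))
     \<longleftrightarrow> (of_int n - of_int m) * v (m + n) = of_int (m + n) * (v n - v m)"
proof -
  have c: "1 - \<epsilon> * of_int k \<noteq> 0" for k using nz[of "- k"] by simp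
  have "lsa_f 0 \<epsilon> n (- (m + n)) = - of_int (m + n) * (1 - \<epsilon> * of_int (m + n)) / (1 - \<epsilon> * of_int m)"
    unfolding lsa_f_alpha_zero by (simp add: algebra_simps)
  then have A: "\<omega> m (n + - (m + n)) * lsa_f 0 \<epsilon> n (- (m + n)) = - of_int (m + n) * (1 - \<epsilon> * of_int (m + n)) * v m"
    using c[of m] v[of m] by simp
  have "lsa_f 0 \<epsilon> m (- (m + n)) = - of_int (m + n) * (1 - \<epsilon> * of_int (m + n)) / (1 - \<epsilon> * of_int n)"
    unfolding lsa_f_alpha_zero by (simp add: algebra_simps)
  then have B: "\<omega> n (m + - (m + n)) * lsa_f 0 \<epsilon> m (- (m + n)) = - of_int (m + n) * (1 - \<epsilon> * of_int (m + n)) * v n"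
    using c[of n] v[of n] by simp
  have L: "(of_int n - of_int m) * \<omega> (m + n) (- (m + n)) =
      (1 - \<epsilon> * of_int (m + n)) * ((of_int n - of_int m) * v (m + n))"
    unfolding v by (simp only: ac_simps)
  have R: "- of_int (m + n) * (1 - \<epsilon> * of_int (m + n)) * v m
      - - of_int (m + n) * (1 - \<epsilon> * of_int (m + n)) * v n
      = (1 - \<epsilon> * of_int (m + n)) * (of_int (m + n) * (v n - v m))"
    by (simp add: algebra_simps)
  show ?thesis unfolding A B L R mult_left_cancel[OF c[of "m + n"]] ..
qed

lemma cocycle_cond_alpha_zero_iff:
  assumes nz: "\<And>k. 1 + \<epsilon> * of_int k \<noteq> 0"
  shows "cocycle_cond 0 \<epsilon> \<omega> \<longleftrightarrow>
           (\<forall>m n. m + n \<noteq> 0 \<longrightarrow> \<omega> m n = 0)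
         \<and> witt_equation (\<lambda>k. \<omega> k (- k) / (1 - \<epsilon> * of_int k))
         \<and> (\<forall>k. \<omega> k (- k) - \<omega> (- k) k = (of_int k - of_int k ^ 3) / 12)"
    (is "_ \<longleftrightarrow> ?supp \<and> witt_equation ?v \<and> ?skew")
proof -
  have v: "\<omega> k (- k) = (1 - \<epsilon> * of_int k) * ?v k" for k
    using nz[of "- k"] by simp
  note anti_diagonal = cocycle_identity_anti_diagonal_iff[where \<omega> = \<omega> and v = ?v, OF nz v]
  show ?thesis
  proof
    assume C: "cocycle_cond 0 \<epsilon> \<omega>"
    then have S: "\<And>m n. \<omega> m n - \<omega> n m = (1/12) * (of_int n ^ 3 - of_int n) * kdelta (m + n) 0"
      and E: "\<And>m n l. (of_int n - of_int m) * \<omega> (m + n) l =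
                \<omega> m (n + l) * lsa_f 0 \<epsilon> n l - \<omega> n (m + l) * lsa_f 0 \<epsilon> m l"
      unfolding cocycle_cond_def by blast+
    have ?supp using cocycle_cond_alpha_zero_support[OF nz C] by blast
    moreover have "witt_equation ?v"
      unfolding witt_equation_def using E anti_diagonal by blast
    moreover have ?skew
    proof
      fix k
      show "\<omega> k (- k) - \<omega> (- k) k = (of_int k - of_int k ^ 3) / 12"
        using S[where m = k and n = "- k"] by (simp add: kdelta_def algebra_simps)
    qed
    ultimately show "?supp \<and> witt_equation ?v \<and> ?skew" by blast
  next
    assume "?supp \<and> witt_equation ?v \<and> ?skew"
    then have supp: ?supp and W: "witt_equation ?v" and skew: ?skew by blast+
    show "cocycle_cond 0 \<epsilon> \<omega>"
      unfolding cocycle_cond_def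
    proof (intro conjI allI)
      fix m n
      show "\<omega> m n - \<omega> n m = (1/12) * (of_int n ^ 3 - of_int n) * kdelta (m + n) 0"
      proof (cases "m + n = 0")
        case True
        then have "m = - n" by simp
        moreover have "\<omega> (- n) n - \<omega> n (- n) = - (\<omega> n (- n) - \<omega> (- n) n)" by simp
        ultimately show ?thesis using skew by (simp add: kdelta_def field_simps)
      next
        case False
        then show ?thesis using supp by (simp add: kdelta_def add.commute)
      qed
    next
      fix m n l
      show "(of_int n - of_int m) * \<omega> (m + n) l =
              \<omega> m (n + l) * lsa_f 0 \<epsilon> n l - \<omega> n (m + l) * lsa_f 0 \<epsilon> m l"
      proof (cases "m + n + l = 0")
        case True
        then have "l = - (m + n)" by simp
        then show ?thesis using W anti_diagonal unfolding witt_equation_def by blast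
      next
        case False
        then show ?thesis using supp by (simp add: ac_simps)
      qed
    qed
  qed
qed

definition lsa_cocycle :: "complex \<Rightarrow> int \<Rightarrow> int \<Rightarrow> complex" where
  "lsa_cocycle \<epsilon> m n =
     (1/24) * (of_int n ^ 3 - of_int n - (\<epsilon> - inverse \<epsilon>) * of_int n ^ 2) * kdelta (m + n) 0"

lemma lsa_cocycle_anti_diagonal:
  assumes "\<epsilon> \<noteq> 0"
  shows "lsa_cocycle \<epsilon> k (- k) = (1 - \<epsilon> * of_int k) * (1/24 * of_int k + 1 / (24 * \<epsilon>) * of_int k ^ 2)"
  using assms unfolding lsa_cocycle_def kdelta_def
  by (simp add: field_simps power2_eq_square power3_eq_cube)

lemma cocycle_cond_alpha_zero_iff_lsa_cocycle:
  assumes nz: "\<And>k. 1 + \<epsilon> * of_int k \<noteq> 0"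
  shows "cocycle_cond 0 \<epsilon> \<omega> \<longleftrightarrow> \<epsilon> \<noteq> 0 \<and> \<omega> = lsa_cocycle \<epsilon>"
proof
  assume "cocycle_cond 0 \<epsilon> \<omega>"
  then have supp: "\<And>m n. m + n \<noteq> 0 \<Longrightarrow> \<omega> m n = 0"
    and W: "witt_equation (\<lambda>k. \<omega> k (- k) / (1 - \<epsilon> * of_int k))"
    and skew: "\<And>k. \<omega> k (- k) - \<omega> (- k) k = (of_int k - of_int k ^ 3) / 12"
    unfolding cocycle_cond_alpha_zero_iff[OF nz] by blast+
  obtain a b where v: "\<And>k. \<omega> k (- k) / (1 - \<epsilon> * of_int k) = a * of_int k + b * of_int k ^ 2"
    using witt_equation_imp_quadratic[OF W] by blast
  have \<omega>_anti: "\<omega> k (- k) = (1 - \<epsilon> * of_int k) * (a * of_int k + b * of_int k ^ 2)" for k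
    using v[of k] nz[of "- k"] by (simp add: field_simps)
  have \<omega>_anti': "\<omega> (- k) k = (1 + \<epsilon> * of_int k) * (- a * of_int k + b * of_int k ^ 2)" for k
    using \<omega>_anti[of "- k"] by simp
  have skew_ab: "2 * a * of_int k - 2 * \<epsilon> * b * of_int k ^ 3 = (of_int k - of_int k ^ 3) / 12" for k
    using skew[of k] unfolding \<omega>_anti \<omega>_anti' by (simp add: algebra_simps power2_eq_square power3_eq_cube)
  have "2 * a - 2 * \<epsilon> * b = 0" "4 * a - 16 * \<epsilon> * b = - 1/2"
    using skew_ab[of 1] skew_ab[of 2] by simp_all
  then have a: "a = 1/24" and \<epsilon>b: "\<epsilon> * b = 1/24" by (simp_all add: algebra_simps)
  then have \<epsilon>: "\<epsilon> \<noteq> 0" by auto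
  have b: "b = 1 / (24 * \<epsilon>)" using \<epsilon>b \<epsilon> by (simp add: field_simps)
  have "\<omega> m n = lsa_cocycle \<epsilon> m n" for m n
  proof (cases "m + n = 0")
    case True
    then have "n = - m" by simp
    then show ?thesis using \<omega>_anti[of m] lsa_cocycle_anti_diagonal[OF \<epsilon>, of m] a b by simp
  next
    case False
    then show ?thesis using supp by (simp add: lsa_cocycle_def kdelta_def)
  qed
  with \<epsilon> show "\<epsilon> \<noteq> 0 \<and> \<omega> = lsa_cocycle \<epsilon>" by blast
next
  assume "\<epsilon> \<noteq> 0 \<and> \<omega> = lsa_cocycle \<epsilon>"
  then have \<epsilon>: "\<epsilon> \<noteq> 0" and \<omega>: "\<omega> = lsa_cocycle \<epsilon>" by blast+
  have "(\<lambda>k. \<omega> k (- k) / (1 - \<epsilon> * of_int k)) = (\<lambda>k. 1/24 * of_int k + 1 / (24 * \<epsilon>) * of_int k ^ 2)"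
  proof
    fix k
    have "1 - \<epsilon> * of_int k \<noteq> 0" using nz[of "- k"] by simp
    then show "\<omega> k (- k) / (1 - \<epsilon> * of_int k) = 1/24 * of_int k + 1 / (24 * \<epsilon>) * of_int k ^ 2"
      unfolding \<omega> lsa_cocycle_anti_diagonal[OF \<epsilon>] by simp
  qed
  then have "witt_equation (\<lambda>k. \<omega> k (- k) / (1 - \<epsilon> * of_int k))"
    by (simp only: witt_equation_quadratic)
  moreover have "\<forall>m n. m + n \<noteq> 0 \<longrightarrow> \<omega> m n = 0"
    unfolding \<omega> by (simp add: lsa_cocycle_def kdelta_def)
  moreover have "\<forall>k. \<omega> k (- k) - \<omega> (- k) k = (of_int k - of_int k ^ 3) / 12"
    using \<epsilon> unfolding \<omega> lsa_cocycle_def kdelta_def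
    by (simp add: field_simps power2_eq_square power3_eq_cube)
  ultimately show "cocycle_cond 0 \<epsilon> \<omega>"
    unfolding cocycle_cond_alpha_zero_iff[OF nz] by blast
qed

theorem theorem4p1:
  fixes \<alpha> \<epsilon> :: complex
  assumes "\<epsilon> = 0 \<or> inverse \<epsilon> \<notin> \<int>"
  shows "((\<alpha> \<noteq> 0 \<or> \<epsilon> = 0) \<longrightarrow> \<not> (\<exists>\<omega>. cocycle_cond \<alpha> \<epsilon> \<omega>))
       \<and> ((\<alpha> = 0 \<and> \<epsilon> \<noteq> 0) \<longrightarrow>
           (\<forall>\<omega>. cocycle_cond \<alpha> \<epsilon> \<omega> \<longleftrightarrow>
              \<omega> = (\<lambda>m n. (1/24) * (of_int n ^ 3 - of_int n - (\<epsilon> - inverse \<epsilon>) * of_int n ^ 2)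
                          * kdelta (m + n) 0)))"
proof -
  have nz: "\<And>k. 1 + \<epsilon> * of_int k \<noteq> 0"
    using assms by (rule one_plus_mult_of_int_neq_zero)
  have "cocycle_cond \<alpha> \<epsilon> \<omega> \<longleftrightarrow> \<alpha> = 0 \<and> \<epsilon> \<noteq> 0 \<and> \<omega> = lsa_cocycle \<epsilon>" for \<omega>
    using cocycle_cond_imp_alpha_zero[OF nz] cocycle_cond_alpha_zero_iff_lsa_cocycle[OF nz] by blast
  then show ?thesis unfolding lsa_cocycle_def [abs_def] by blast
qed

end
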